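(* Let $\alpha\in(0,1]$, let $F\in C^{1,\alpha}_{\mathsf h}(\mathbb H,\mathbb R^2)$, let $p\in\mathbb H$ be a nondegenerate point for $F$, let $I\subseteq\mathbb R$ be an interval and let $\gamma:I\to\mathbb H$ be a solution to the level set differential equation (LSDE) associated to $F$ and $p$. Then there exist $\delta>0$ and $\varrho>0$ such that $$|t-s|^{1/2}\le \varrho\,\mathsf d(\gamma_s,\gamma_t)\quad\text{for all } s,t\in I \text{ with } |t-s|\le 2\delta.$$
   Context: The Heisenberg group $\mathbb H$ is $\mathbb R^3$ with product $(x^1,x^2,x^3)(y^1,y^2,y^3)=(x^1+y^1,x^2+y^2,x^3+y^3+x^1y^2-x^2y^1)$ (identity $0$, inverse $x^{-1}=-x$). For $x\in\mathbb H$ write $x^{\mathsf h}=(x^1,x^2)\in\mathbb R^2$, $x^{\mathsf v}=x^3$, $[x]^{\mathsf h}=|x^{\mathsf h}|$, $[x]^{\mathsf v}=\sqrt{|x^3|}$. Dilations are $\delta_r(x)=(rx^1,rx^2,r^2x^3)$. $\mathsf d$ is a fixed distance on $\mathbb H$ which is left-invariant ($\mathsf d(zx,zy)=\mathsf d(x,y)$) and $1$-homogeneous ($\mathsf d(\delta_rx,\delta_ry)=r\,\mathsf d(x,y)$); $B(x,r)$ denotes the open $\mathsf d$-ball. Horizontal vector fields: $X_1=\partial_1-x^2\partial_3$, $X_2=\partial_2+x^1\partial_3$. For $\alpha\in(0,1]$, $C^{1,\alpha}_{\mathsf h}(\mathbb H,\mathbb R^k)$ is the set of $F:\mathbb H\to\mathbb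 R^k$ such that $X_1F,X_2F$ exist everywhere and the horizontal Jacobian $\nabla_{\mathsf h}F=[X_1F,X_2F]$ (a $k\times2$ matrix) is $\alpha$-Hölder with respect to $\mathsf d$ on every bounded set. A point $p$ is nondegenerate for $F:\mathbb H\to\mathbb R^2$ if $\nabla_{\mathsf h}F(p)$ is invertible. Set $\mathrm R(x,y):=F(y)-F(x)-\nabla_{\mathsf h}F(x)\,(x^{-1}y)^{\mathsf h}$. LSDE: given $F\in C^{1,\alpha}_{\mathsf h}(\mathbb H,\mathbb R^2)$, $p$ nondegenerate and an interval $I$, a continuous $\gamma:I\to\mathbb H$ is a solution if for all $s,t\in I$: $(\gamma_s^{-1}\gamma_t)^{\mathsf h}=-\nabla_{\mathsf h}F(p)^{-1}(\mathrm R(p,\gamma_t)-\mathrm R(p,\gamma_s))$ and $(\gamma_s^{-1}\gamma_t)^{\mathsf v}=t-s+\mathbb E_{st}$, where $\mathbb E:I^2\to\mathbb R$ satisfies $\|\mathbb E\|:=\sup_{s\neq t}|\mathbb E_{st}|/|t-s|^{1+\alpha}<\infty$. *)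

theory Defs
  imports "HOL-Analysis.Analysis"
begin

type_synonym heis = "real \<times> real \<times> real"

definition hmul :: "heis \<Rightarrow> heis \<Rightarrow> heis" where
  "hmul x y = (fst x + fst y, fst (snd x) + fst (snd y),
       snd (snd x) + snd (snd y) + fst x * fst (snd y) - fst (snd x) * fst y)"

definition hinv :: "heis \<Rightarrow> heis" where
  "hinv x = - x"

definition dil :: "real \<Rightarrow> heis \<Rightarrow> heis" where
  "dil r x = (r * fst x, r * fst (snd x), r\<^sup>2 * snd (snd x))"

definition hpart :: "heis \<Rightarrow> real^2" where
  "hpart x = vector [fst x, fst (snd x)]"

definition vpart :: "heis \<Rightarrow> real" where
  "vpart x = snd (snd x)"

definition homog_left_inv_dist :: "(heis \<Rightarrow> heis \<Rightarrow> real) \<Rightarrow> bool" where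
  "homog_left_inv_dist d \<longleftrightarrow>
     (\<forall>x y. 0 \<le> d x y) \<and> (\<forall>x y. d x y = 0 \<longleftrightarrow> x = y) \<and> (\<forall>x y. d x y = d y x) \<and>
     (\<forall>x y z. d x z \<le> d x y + d y z) \<and>
     (\<forall>x y z. d (hmul z x) (hmul z y) = d x y) \<and>
     (\<forall>r x y. r > 0 \<longrightarrow> d (dil r x) (dil r y) = r * d x y)"

text \<open>Horizontal derivatives: X1 F (x) = d/dt F(x (t,0,0)) at t = 0, i.e.
  (d_1 - x2 d_3) F; X2 F (x) = d/dt F(x (0,t,0)) at t = 0, i.e. (d_2 + x1 d_3) F.\<close>
definition X1 :: "(heis \<Rightarrow> real^2) \<Rightarrow> heis \<Rightarrow> real^2" where
  "X1 F x = vector_derivative (\<lambda>t. F (hmul x (t, 0, 0))) (at 0)"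

definition X2 :: "(heis \<Rightarrow> real^2) \<Rightarrow> heis \<Rightarrow> real^2" where
  "X2 F x = vector_derivative (\<lambda>t. F (hmul x (0, t, 0))) (at 0)"

definition nabla_h :: "(heis \<Rightarrow> real^2) \<Rightarrow> heis \<Rightarrow> real^2^2" where
  "nabla_h F x = (\<chi> i j. if j = 1 then X1 F x $ i else X2 F x $ i)"

definition C1alpha_h :: "(heis \<Rightarrow> heis \<Rightarrow> real) \<Rightarrow> real \<Rightarrow> (heis \<Rightarrow> real^2) \<Rightarrow> bool" where
  "C1alpha_h d \<alpha> F \<longleftrightarrow>
     (\<forall>x. (\<lambda>t. F (hmul x (t, 0, 0))) differentiable (at 0) \<and>
          (\<lambda>t. F (hmul x (0, t, 0))) differentiable (at 0)) \<and>
     (\<forall>K. (\<exists>R. \<forall>x\<in>K. d 0 x \<le> R) \<longrightarrow>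
          (\<exists>C. \<forall>x\<in>K. \<forall>y\<in>K. norm (nabla_h F x - nabla_h F y) \<le> C * d x y powr \<alpha>))"

definition nondegenerate :: "(heis \<Rightarrow> real^2) \<Rightarrow> heis \<Rightarrow> bool" where
  "nondegenerate F p \<longleftrightarrow> invertible (nabla_h F p)"

definition Rem :: "(heis \<Rightarrow> real^2) \<Rightarrow> heis \<Rightarrow> heis \<Rightarrow> real^2" where
  "Rem F x y = F y - F x - nabla_h F x *v hpart (hmul (hinv x) y)"

definition LSDE_solution ::
  "real \<Rightarrow> (heis \<Rightarrow> real^2) \<Rightarrow> heis \<Rightarrow> real set \<Rightarrow> (real \<Rightarrow> heis) \<Rightarrow> bool" where
  "LSDE_solution \<alpha> F p I \<gamma> \<longleftrightarrow>
     continuous_on I \<gamma> \<and>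
     (\<forall>s\<in>I. \<forall>t\<in>I. hpart (hmul (hinv (\<gamma> s)) (\<gamma> t)) =
         - (matrix_inv (nabla_h F p) *v (Rem F p (\<gamma> t) - Rem F p (\<gamma> s)))) \<and>
     (\<exists>E :: real \<Rightarrow> real \<Rightarrow> real.
         (\<forall>s\<in>I. \<forall>t\<in>I. vpart (hmul (hinv (\<gamma> s)) (\<gamma> t)) = t - s + E s t) \<and>
         (\<exists>M. \<forall>s\<in>I. \<forall>t\<in>I. s \<noteq> t \<longrightarrow> \<bar>E s t\<bar> \<le> M * \<bar>t - s\<bar> powr (1 + \<alpha>)))"

end

theory Submission
  imports Defs
begin

text \<open>Only the vertical component of the LSDE matters: the vertical coordinate of
  (gamma s)^-1 (gamma t) is t - s up to an error O(|t - s|^(1+alpha)), hence at least |t - s|/2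
  for nearby times. On the other hand, for every left-invariant homogeneous distance the vertical
  coordinate of x is controlled by d(0, x)^2: comparing x with x x and the dilation of x x by 1/2,
  whose horizontal parts agree, isolates the vertical point (0, 0, v/2), and homogeneity gives
  d(0, (0, 0, w)) = sqrt |w| d(0, (0, 0, 1)).\<close>

lemma hmul_zero_right [simp]: "hmul x 0 = x"
  by (simp add: hmul_def zero_prod_def)

lemma hmul_hinv_left [simp]: "hmul (hinv x) x = 0"
  by (cases x) (simp add: hmul_def hinv_def zero_prod_def)

lemma hmul_uminus_right [simp]: "hmul x (- x) = 0"
  by (cases x) (simp add: hmul_def algebra_simps zero_prod_def)

context
  fixes d :: "heis \<Rightarrow> heis \<Rightarrow> real"
  assumes d: "homog_left_inv_dist d"
begin

lemma dist_nonneg: "0 \<le> d x y"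
  and dist_eq_0_iff: "d x y = 0 \<longleftrightarrow> x = y"
  and dist_commute: "d x y = d y x"
  and dist_triangle: "d x z \<le> d x y + d y z"
  and dist_hmul_left: "d (hmul z x) (hmul z y) = d x y"
  and dist_dil: "r > 0 \<Longrightarrow> d (dil r x) (dil r y) = r * d x y"
  using d unfolding homog_left_inv_dist_def by blast+

lemma dist_origin_vertical_unit_pos: "d 0 (0, 0, 1) > 0"
  using dist_nonneg dist_eq_0_iff by (simp add: less_le zero_prod_def)

lemma dist_eq_dist_origin: "d x y = d 0 (hmul (hinv x) y)"
  using dist_hmul_left[of "hinv x" x y] by simp

lemma dist_origin_uminus: "d 0 (- x) = d 0 x"
  using dist_hmul_left[of x 0 "- x"] by (simp add: dist_commute)

lemma dist_origin_vertical: "d 0 (0, 0, w) = sqrt \<bar>w\<bar> * d 0 (0, 0, 1)"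
proof -
  have pos: "d 0 (0, 0, w) = sqrt w * d 0 (0, 0, 1)" if "w > 0" for w
  proof -
    have "dil (sqrt w) (0, 0, 1) = (0, 0, w)" "dil (sqrt w) 0 = 0"
      using that by (simp_all add: dil_def zero_prod_def)
    then show ?thesis
      using dist_dil[of "sqrt w" 0 "(0, 0, 1)"] that by simp
  qed
  consider "w > 0" | "w = 0" | "w < 0" by linarith
  then show ?thesis
  proof cases
    case 1
    then show ?thesis using pos[OF 1] by simp
  next
    case 2
    then show ?thesis by (simp add: dist_eq_0_iff zero_prod_def)
  next
    case 3
    have "- (0, 0, - w) = ((0, 0, w) :: heis)" by simp
    then have "d 0 (0, 0, w) = d 0 (0, 0, - w)"
      using dist_origin_uminus[of "(0, 0, - w)"] by simp
    with 3 show ?thesis using pos[of "- w"] by simp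
  qed
qed

lemma vpart_le_dist_origin: "sqrt \<bar>vpart x\<bar> * d 0 (0, 0, 1) \<le> 2 * sqrt 2 * d 0 x"
proof -
  obtain h1 h2 v where x: "x = (h1, h2, v)" by (cases x)
  define u where "u = (h1, h2, v / 2)"
  have "d 0 (hmul x x) \<le> d 0 x + d x (hmul x x)"
    by (rule dist_triangle)
  also have "d x (hmul x x) = d 0 x"
    using dist_hmul_left[of x 0 x] by simp
  finally have xx: "d 0 (hmul x x) \<le> 2 * d 0 x" by simp
  have "dil (1/2) (hmul x x) = u"
    by (simp add: x u_def hmul_def dil_def power2_eq_square)
  moreover have "dil (1/2) 0 = 0"
    by (simp add: dil_def zero_prod_def)
  ultimately have "d 0 u = d 0 (hmul x x) / 2"
    using dist_dil[of "1/2" 0 "hmul x x"] by simp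
  with xx have u: "d 0 u \<le> d 0 x" by simp
  have "d 0 (0, 0, v / 2) \<le> d 0 x + d x (0, 0, v / 2)"
    by (rule dist_triangle)
  also have "hmul x (- u) = (0, 0, v / 2)"
    by (simp add: x u_def hmul_def algebra_simps)
  then have "d x (0, 0, v / 2) = d 0 (- u)"
    using dist_hmul_left[of x 0 "- u"] by simp
  also have "d 0 (- u) \<le> d 0 x"
    using u by (simp add: dist_origin_uminus)
  finally have "sqrt (\<bar>v\<bar> / 2) * d 0 (0, 0, 1) \<le> 2 * d 0 x"
    using dist_origin_vertical[of "v / 2"] by simp
  then have "sqrt 2 * (sqrt (\<bar>v\<bar> / 2) * d 0 (0, 0, 1)) \<le> sqrt 2 * (2 * d 0 x)"
    by (rule mult_left_mono) simp
  moreover have "sqrt 2 * sqrt (\<bar>v\<bar> / 2) = sqrt \<bar>v\<bar>"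
    by (simp add: real_sqrt_mult[symmetric])
  ultimately show ?thesis
    by (simp add: x vpart_def mult.assoc[symmetric] mult.commute[of 2])
qed

end

lemma powr_error_le_half:
  fixes M \<alpha> :: real
  assumes "\<alpha> > 0"
  shows "\<exists>\<delta>>0. \<forall>\<tau>. \<bar>\<tau>\<bar> \<le> \<delta> \<longrightarrow> M * \<bar>\<tau>\<bar> powr (1 + \<alpha>) \<le> \<bar>\<tau>\<bar> / 2"
proof (intro exI conjI allI impI)
  define M' where "M' = max M 0 + 1"
  have M': "M' > 0" "M \<le> M'" unfolding M'_def by simp_all
  show "(1 / (2 * M')) powr (1 / \<alpha>) > 0"
    using M' by simp
  fix \<tau> :: real
  assume "\<bar>\<tau>\<bar> \<le> (1 / (2 * M')) powr (1 / \<alpha>)"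
  then have "\<bar>\<tau>\<bar> powr \<alpha> \<le> ((1 / (2 * M')) powr (1 / \<alpha>)) powr \<alpha>"
    using assms by (intro powr_mono2) simp_all
  also have "\<dots> = 1 / (2 * M')"
    using assms M' by (simp add: powr_powr)
  finally have small: "\<bar>\<tau>\<bar> powr \<alpha> \<le> 1 / (2 * M')" .
  have "M * \<bar>\<tau>\<bar> powr (1 + \<alpha>) \<le> M' * (\<bar>\<tau>\<bar> * \<bar>\<tau>\<bar> powr \<alpha>)"
    using M' by (simp add: powr_add mult_right_mono)
  also have "\<dots> \<le> M' * (\<bar>\<tau>\<bar> * (1 / (2 * M')))"
    using M' small by (intro mult_left_mono) simp_all
  also have "\<dots> = \<bar>\<tau>\<bar> / 2"
    using M' by simp
  finally show "M * \<bar>\<tau>\<bar> powr (1 + \<alpha>) \<le> \<bar>\<tau>\<bar> / 2" .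
qed

lemma LSDE_solution_vpart_ge_half:
  assumes "LSDE_solution \<alpha> F p I \<gamma>" and "\<alpha> > 0"
  shows "\<exists>\<delta>>0. \<forall>s\<in>I. \<forall>t\<in>I. \<bar>t - s\<bar> \<le> 2 * \<delta> \<longrightarrow>
           \<bar>t - s\<bar> \<le> 2 * \<bar>vpart (hmul (hinv (\<gamma> s)) (\<gamma> t))\<bar>"
proof -
  obtain E M where vert: "\<And>s t. s \<in> I \<Longrightarrow> t \<in> I \<Longrightarrow>
        vpart (hmul (hinv (\<gamma> s)) (\<gamma> t)) = t - s + E s t"
    and err: "\<And>s t. s \<in> I \<Longrightarrow> t \<in> I \<Longrightarrow> s \<noteq> t \<Longrightarrow> \<bar>E s t\<bar> \<le> M * \<bar>t - s\<bar> powr (1 + \<alpha>)"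
    using assms(1) unfolding LSDE_solution_def by blast
  obtain \<delta>' where "\<delta>' > 0" and \<delta>': "\<And>\<tau>. \<bar>\<tau>\<bar> \<le> \<delta>' \<Longrightarrow> M * \<bar>\<tau>\<bar> powr (1 + \<alpha>) \<le> \<bar>\<tau>\<bar> / 2"
    using powr_error_le_half[OF assms(2), of M] by blast
  define \<delta> where "\<delta> = \<delta>' / 2"
  have "\<delta> > 0" and \<delta>: "\<And>\<tau>. \<bar>\<tau>\<bar> \<le> 2 * \<delta> \<Longrightarrow> M * \<bar>\<tau>\<bar> powr (1 + \<alpha>) \<le> \<bar>\<tau>\<bar> / 2"
    using \<open>\<delta>' > 0\<close> \<delta>' by (simp_all add: \<delta>_def)
  have "\<bar>t - s\<bar> \<le> 2 * \<bar>vpart (hmul (hinv (\<gamma> s)) (\<gamma> t))\<bar>"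
    if "s \<in> I" "t \<in> I" "\<bar>t - s\<bar> \<le> 2 * \<delta>" for s t
  proof (cases "s = t")
    case False
    then have "\<bar>E s t\<bar> \<le> \<bar>t - s\<bar> / 2"
      using err[OF that(1,2)] \<delta>[OF that(3)] by linarith
    then show ?thesis
      using vert[OF that(1,2)] by (simp add: abs_if split: if_splits)
  qed simp
  with \<open>\<delta> > 0\<close> show ?thesis by blast
qed

theorem mainTheorem1:
  fixes d :: "heis \<Rightarrow> heis \<Rightarrow> real" and \<alpha> :: real and F :: "heis \<Rightarrow> real^2"
    and p :: heis and I :: "real set" and \<gamma> :: "real \<Rightarrow> heis"
  assumes "homog_left_inv_dist d"
    and "0 < \<alpha>" and "\<alpha> \<le> 1"
    and "C1alpha_h d \<alpha> F"
    and "nondegenerate F p"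
    and "is_interval I"
    and "LSDE_solution \<alpha> F p I \<gamma>"
  shows "\<exists>\<delta>>0. \<exists>\<rho>>0. \<forall>s\<in>I. \<forall>t\<in>I. \<bar>t - s\<bar> \<le> 2 * \<delta> \<longrightarrow>
           sqrt \<bar>t - s\<bar> \<le> \<rho> * d (\<gamma> s) (\<gamma> t)"
proof -
  obtain \<delta> where "\<delta> > 0" and \<delta>: "\<And>s t. s \<in> I \<Longrightarrow> t \<in> I \<Longrightarrow> \<bar>t - s\<bar> \<le> 2 * \<delta> \<Longrightarrow>
      \<bar>t - s\<bar> \<le> 2 * \<bar>vpart (hmul (hinv (\<gamma> s)) (\<gamma> t))\<bar>"
    using LSDE_solution_vpart_ge_half[OF assms(7,2)] by blast
  define A where "A = d 0 (0, 0, 1)"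
  have "A > 0"
    unfolding A_def by (rule dist_origin_vertical_unit_pos[OF assms(1)])
  have "sqrt \<bar>t - s\<bar> \<le> 4 / A * d (\<gamma> s) (\<gamma> t)"
    if "s \<in> I" "t \<in> I" "\<bar>t - s\<bar> \<le> 2 * \<delta>" for s t
  proof -
    define v where "v = vpart (hmul (hinv (\<gamma> s)) (\<gamma> t))"
    have "sqrt \<bar>t - s\<bar> * A \<le> sqrt 2 * sqrt \<bar>v\<bar> * A"
      using \<delta>[OF that] \<open>A > 0\<close> unfolding v_def real_sqrt_mult[symmetric]
      by (intro mult_right_mono real_sqrt_le_mono) simp_all
    also have "\<dots> \<le> sqrt 2 * (2 * sqrt 2 * d (\<gamma> s) (\<gamma> t))"
      using vpart_le_dist_origin[OF assms(1), of "hmul (hinv (\<gamma> s)) (\<gamma> t)"]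
      unfolding mult.assoc v_def A_def dist_eq_dist_origin[OF assms(1), of "\<gamma> s"]
      by (rule mult_left_mono) simp
    also have "\<dots> = 4 * d (\<gamma> s) (\<gamma> t)"
      by simp
    finally show ?thesis
      using \<open>A > 0\<close> by (simp add: field_simps)
  qed
  with \<open>\<delta> > 0\<close> \<open>A > 0\<close> show ?thesis
    by (intro exI[of _ \<delta>] conjI exI[of _ "4 / A"]) auto
qed

end
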